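(* Let $\lambda\mapsto N(\lambda),M(\lambda)\in\mathbb{R}^{2m\times2m}$ be continuously differentiable in a real parameter $\lambda$, write $\partial=d/d\lambda$, and define $\alpha,\beta,\gamma,F_2,G_2,F_3$ (depending on $\lambda$ and $t$) by $$\begin{bmatrix}\alpha(t)&\beta(t)&\gamma(t)\\0&F_2(t)&G_2(t)\\0&0&F_3(t)\end{bmatrix}:=\exp\!\left(\begin{bmatrix}-N^T&MJ&0\\0&-N^T&M\\0&0&N\end{bmatrix}t\right).$$ Assume $M=M^T$, $F_2(s)^TF_3(s)=I$ and $\partial F_3(s)=-JG_2(s)$ for all $s\in[0,H]$ and all $\lambda$. Then $$\partial G_2(H)=F_2(H)\Big(-\big(F_3(H)^T\gamma(H)\big)^T-F_3(H)^T\gamma(H)+\int_0^HF_3(s)^T\,\partial M\,F_3(s)\,ds-\big(-JG_2(H)\big)^TG_2(H)\Big).$$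
   Context: $J=\begin{bmatrix}0&I_m\\-I_m&0\end{bmatrix}\in\mathbb{R}^{2m\times2m}$. From the definition, $F_2(t)=\exp(-N^Tt)$, $F_3(t)=\exp(Nt)$ and $F_3(t)^TG_2(t)=\int_0^t\exp(N^Ts)M\exp(Ns)\,ds$. *)

theory Defs
  imports "HOL-Analysis.Analysis"
begin

text \<open>Square matrices are indexed by finite types. A 2m x 2m matrix is indexed by
  the sum type 'm + 'm; the 6m x 6m block matrix by ('m+'m) + ('m+'m) + ('m+'m).\<close>

primrec mpow :: "real^'n::finite^'n \<Rightarrow> nat \<Rightarrow> real^'n^'n" where
  "mpow A 0 = mat 1"
| "mpow A (Suc k) = A ** mpow A k"

definition mexp :: "real^'n::finite^'n \<Rightarrow> real^'n^'n" where
  "mexp A = (\<Sum>k. (1 / fact k) *\<^sub>R mpow A k)"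

text \<open>The symplectic matrix J = [[0, I], [-I, 0]].\<close>
definition Jmat :: "real^('m::finite + 'm)^('m + 'm)" where
  "Jmat = (\<chi> i j. case (i, j) of
      (Inl a, Inr b) \<Rightarrow> (if a = b then 1 else 0)
    | (Inr a, Inl b) \<Rightarrow> (if a = b then -1 else 0)
    | _ \<Rightarrow> 0)"

definition block3 ::
  "real^'n::finite^'n \<Rightarrow> real^'n^'n \<Rightarrow> real^'n^'n \<Rightarrow>
   real^'n^'n \<Rightarrow> real^'n^'n \<Rightarrow> real^'n^'n \<Rightarrow>
   real^'n^'n \<Rightarrow> real^'n^'n \<Rightarrow> real^'n^'n \<Rightarrow> real^('n + 'n + 'n)^('n + 'n + 'n)" where
  "block3 A11 A12 A13 A21 A22 A23 A31 A32 A33 = (\<chi> i j. case (i, j) of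
      (Inl a, Inl b) \<Rightarrow> A11 $ a $ b
    | (Inl a, Inr (Inl b)) \<Rightarrow> A12 $ a $ b
    | (Inl a, Inr (Inr b)) \<Rightarrow> A13 $ a $ b
    | (Inr (Inl a), Inl b) \<Rightarrow> A21 $ a $ b
    | (Inr (Inl a), Inr (Inl b)) \<Rightarrow> A22 $ a $ b
    | (Inr (Inl a), Inr (Inr b)) \<Rightarrow> A23 $ a $ b
    | (Inr (Inr a), Inl b) \<Rightarrow> A31 $ a $ b
    | (Inr (Inr a), Inr (Inl b)) \<Rightarrow> A32 $ a $ b
    | (Inr (Inr a), Inr (Inr b)) \<Rightarrow> A33 $ a $ b)"

definition blk :: "nat \<Rightarrow> nat \<Rightarrow> real^('n::finite + 'n + 'n)^('n + 'n + 'n) \<Rightarrow> real^'n^'n" where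
  "blk p q X = (\<chi> a b.
     let emb = (\<lambda>r (x::'n). if r = (1::nat) then Inl x else if r = 2 then Inr (Inl x) else Inr (Inr x))
     in X $ emb p a $ emb q b)"

definition gen :: "real^('m::finite+'m)^('m+'m) \<Rightarrow> real^('m+'m)^('m+'m)
    \<Rightarrow> real^(('m+'m) + ('m+'m) + ('m+'m))^(('m+'m) + ('m+'m) + ('m+'m))" where
  "gen N M = block3 (- transpose N) (M ** Jmat) 0  0 (- transpose N) M  0 0 N"

definition Emat where "Emat N M t = mexp (t *\<^sub>R gen N M)"

definition alpha where "alpha N M t = blk 1 1 (Emat N M t)"
definition beta where "beta N M t = blk 1 2 (Emat N M t)"
definition gamma where "gamma N M t = blk 1 3 (Emat N M t)"
definition F2 where "F2 N M t = blk 2 2 (Emat N M t)"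
definition G2 where "G2 N M t = blk 2 3 (Emat N M t)"
definition F3 where "F3 N M t = blk 3 3 (Emat N M t)"

end

theory Submission
  imports Defs
begin

text \<open>
  Writing E(t) = exp(t G) for the block-triangular generator G, the blocks F3, G2 and gamma
  satisfy F3' = N F3, G2' = -N^T G2 + M F3 and gamma' = -N^T gamma + M J G2 (in t), with
  F3(0) = I and G2(0) = gamma(0) = 0. Since F3^T X is then the integral of F3^T R whenever
  X' = -N^T X + R, we get F3(H)^T G2(H) = P := integral of F3^T M F3 over [0,H], and
  F3(H)^T gamma(H) = integral of F3^T M J G2. Differentiating P in lambda under the integral
  sign (using dF3 = -J G2 and symmetry of M) yields
  P' = integral of F3^T M' F3 - F3(H)^T gamma(H) - (F3(H)^T gamma(H))^T.
  Finally G2(H) solves F3(H)^T Y = P, and F2(H) is a continuous left inverse of F3(H)^T,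
  so Y' = F2(H) (P' - (dF3(H))^T G2(H)), which is the claimed formula.
\<close>

lemma bounded_bilinear_matrix_mult:
  "bounded_bilinear ((**) :: real^'n::finite^'m::finite \<Rightarrow> real^'p::finite^'n \<Rightarrow> real^'p^'m)"
proof -
  have "bilinear ((**) :: real^'n^'m \<Rightarrow> real^'p^'n \<Rightarrow> real^'p^'m)"
    unfolding bilinear_def
    by (auto intro!: linearI simp: vec_eq_iff matrix_matrix_mult_def sum.distrib algebra_simps sum_distrib_left)
  then show ?thesis by (rule bilinear_conv_bounded_bilinear[THEN iffD1])
qed

lemma bounded_linear_transpose: "bounded_linear (transpose :: real^'n::finite^'m::finite \<Rightarrow> real^'m^'n)"
  by (rule linear_conv_bounded_linear[THEN iffD1], rule linearI) (auto simp: vec_eq_iff transpose_def)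

lemmas matrix_mult_diff_left = bounded_bilinear.diff_left[OF bounded_bilinear_matrix_mult]
lemmas matrix_mult_diff_right = bounded_bilinear.diff_right[OF bounded_bilinear_matrix_mult]
lemmas matrix_mult_add_left = bounded_bilinear.add_left[OF bounded_bilinear_matrix_mult]
lemmas matrix_mult_minus_left = bounded_bilinear.minus_left[OF bounded_bilinear_matrix_mult]
lemmas matrix_mult_minus_right = bounded_bilinear.minus_right[OF bounded_bilinear_matrix_mult]
lemmas transpose_minus = linear_neg[OF bounded_linear.linear[OF bounded_linear_transpose]]

lemma continuous_on_matrix_mult [continuous_intros]:
  "continuous_on S f \<Longrightarrow> continuous_on S g \<Longrightarrow> continuous_on S (\<lambda>x. f x ** g x)"
  for f :: "_ \<Rightarrow> real^'n::finite^'m::finite" and g :: "_ \<Rightarrow> real^'p::finite^'n"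
  by (rule bounded_bilinear.continuous_on[OF bounded_bilinear_matrix_mult])

lemma continuous_on_transpose [continuous_intros]:
  "continuous_on S f \<Longrightarrow> continuous_on S (\<lambda>x. transpose (f x))"
  for f :: "_ \<Rightarrow> real^'n::finite^'m::finite"
  by (rule bounded_linear.continuous_on[OF bounded_linear_transpose])

lemmas has_vector_derivative_matrix_mult =
  bounded_bilinear.has_vector_derivative[OF bounded_bilinear_matrix_mult]
lemmas has_vector_derivative_transpose =
  bounded_linear.has_vector_derivative[OF bounded_linear_transpose]

text \<open>Powers of a matrix grow at most geometrically in its norm
  (the norm on matrices is submultiplicative up to a constant).\<close>
lemma norm_mpow_le:
  obtains K :: real where "K > 0"
    "\<And>A n. norm (mpow (A::real^'n::finite^'n) n) \<le> norm (mat 1::real^'n^'n) * (K * norm A) ^ n"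
proof -
  obtain K where K: "K > 0" "\<And>a b. norm ((a::real^'n^'n) ** (b::real^'n^'n)) \<le> norm a * norm b * K"
    using bounded_bilinear.pos_bounded[OF bounded_bilinear_matrix_mult] by blast
  have "norm (mpow A n) \<le> norm (mat 1::real^'n^'n) * (K * norm A) ^ n" for A :: "real^'n^'n" and n
  proof (induction n)
    case (Suc n)
    have "norm (mpow A (Suc n)) \<le> norm A * norm (mpow A n) * K" using K(2) by simp
    also have "\<dots> \<le> norm A * (norm (mat 1::real^'n^'n) * (K * norm A) ^ n) * K"
      using Suc K(1) by (simp add: mult_left_mono mult_right_mono)
    finally show ?case by (simp add: algebra_simps)
  qed simp
  with K(1) that show ?thesis by blast
qed

lemma summable_exp_majorant: "summable (\<lambda>n. C * r ^ n / fact n :: real)"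
  using summable_mult[OF summable_exp[of r], of C] by (simp add: field_simps)

lemma mexp_sums: "(\<lambda>k. (1 / fact k) *\<^sub>R mpow (A::real^'n::finite^'n) k) sums mexp A"
proof -
  obtain K where K: "K > 0"
    "\<And>A n. norm (mpow (A::real^'n::finite^'n) n) \<le> norm (mat 1::real^'n^'n) * (K * norm A) ^ n"
    using norm_mpow_le by blast
  have "summable (\<lambda>k. (1 / fact k) *\<^sub>R mpow A k)"
  proof (rule summable_comparison_test[OF _ summable_exp_majorant])
    show "\<exists>N. \<forall>n\<ge>N. norm ((1 / fact n) *\<^sub>R mpow A n) \<le> norm (mat 1::real^'n^'n) * (K * norm A) ^ n / fact n"
      using K(2)[of A] by (auto simp: divide_right_mono)
  qed
  then show ?thesis unfolding mexp_def by (rule summable_sums)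
qed

lemma mexp_zero: "mexp (0::real^'n::finite^'n) = mat 1"
proof -
  have "(\<lambda>k. (1 / fact k) *\<^sub>R mpow (0::real^'n^'n) k) = (\<lambda>k. if k = 0 then mat 1 else 0)"
    by (rule ext, case_tac k) auto
  then have "(\<lambda>k. (1 / fact k) *\<^sub>R mpow (0::real^'n^'n) k) sums mat 1"
    using sums_single[of 0 "\<lambda>_. mat 1 :: real^'n^'n"] by simp
  then show ?thesis using mexp_sums sums_unique2 by blast
qed

lemma mpow_scaleR: "mpow (t *\<^sub>R A) k = t ^ k *\<^sub>R mpow (A::real^'n::finite^'n) k"
  by (induction k) (simp_all add: scalar_matrix_assoc[symmetric] matrix_scalar_ac)

lemma continuous_on_mpow [continuous_intros]:
  "continuous_on S f \<Longrightarrow> continuous_on S (\<lambda>x. mpow (f x) n)"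
  for f :: "_ \<Rightarrow> real^'n::finite^'n"
  by (induction n) (simp_all add: continuous_on_matrix_mult)

text \<open>The exponential series converges uniformly on balls, hence its sum is continuous.\<close>
lemma isCont_mexp: "isCont mexp (A0::real^'n::finite^'n)"
proof -
  obtain K where K: "K > 0"
    "\<And>A n. norm (mpow (A::real^'n::finite^'n) n) \<le> norm (mat 1::real^'n^'n) * (K * norm A) ^ n"
    using norm_mpow_le by blast
  define R where "R = norm A0 + 1"
  have unif: "uniform_limit (ball 0 R) (\<lambda>n X. \<Sum>i<n. (1 / fact i) *\<^sub>R mpow (X::real^'n^'n) i)
      (\<lambda>X. \<Sum>i. (1 / fact i) *\<^sub>R mpow X i) sequentially"
  proof (rule Weierstrass_m_test[OF _ summable_exp_majorant])
    fix n and X :: "real^'n^'n" assume "X \<in> ball 0 R"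
    then have "norm (mat 1::real^'n^'n) * (K * norm X) ^ n \<le> norm (mat 1::real^'n^'n) * (K * R) ^ n"
      using K(1) by (intro mult_left_mono power_mono) auto
    with K(2)[of X n] show "norm ((1 / fact n) *\<^sub>R mpow X n) \<le> norm (mat 1::real^'n^'n) * (K * R) ^ n / fact n"
      by (simp add: divide_right_mono)
  qed
  have "continuous_on (ball 0 R) (mexp::real^'n^'n \<Rightarrow> _)"
    unfolding mexp_def[abs_def]
    by (rule uniform_limit_theorem[OF _ unif]) (intro always_eventually allI continuous_intros, simp)
  moreover have "A0 \<in> ball 0 R" by (simp add: R_def)
  ultimately show ?thesis using continuous_on_eq_continuous_at open_ball by blast
qed

lemma continuous_on_mexp [continuous_intros]:
  "continuous_on S f \<Longrightarrow> continuous_on S (\<lambda>x. mexp (f x))"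
  for f :: "_ \<Rightarrow> real^'n::finite^'n"
  using continuous_on_compose2[OF continuous_at_imp_continuous_on[of UNIV mexp]] isCont_mexp by blast

lemma has_vector_derivative_series_majorant:
  fixes f f' :: "nat \<Rightarrow> real \<Rightarrow> 'a::banach"
  assumes S: "open S" "convex S" "x \<in> S"
    and f': "\<And>n y. y \<in> S \<Longrightarrow> (f n has_vector_derivative f' n y) (at y)"
    and bound: "\<And>n y. y \<in> S \<Longrightarrow> norm (f' n y) \<le> B n" and "summable B"
    and sums: "\<And>y. y \<in> S \<Longrightarrow> (\<lambda>n. f n y) sums g y"
  shows "(g has_vector_derivative (\<Sum>n. f' n x)) (at x)"
proof -
  define g' where "g' y = (\<Sum>n. f' n y)" for y
  have unif: "uniform_limit S (\<lambda>n y. \<Sum>i<n. f' i y) g' sequentially"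
    unfolding g'_def by (rule Weierstrass_m_test[OF bound \<open>summable B\<close>])
  have "\<forall>\<^sub>F n in sequentially. \<forall>y\<in>S. \<forall>h. norm ((\<Sum>i<n. h *\<^sub>R f' i y) - h *\<^sub>R g' y) \<le> e * norm h"
    if "e > 0" for e
    using uniform_limitD[OF unif that]
  proof eventually_elim
    case (elim n)
    have "norm ((\<Sum>i<n. h *\<^sub>R f' i y) - h *\<^sub>R g' y) \<le> e * norm h" if "y \<in> S" for y h
    proof -
      have "norm ((\<Sum>i<n. h *\<^sub>R f' i y) - h *\<^sub>R g' y) = \<bar>h\<bar> * dist (\<Sum>i<n. f' i y) (g' y)"
        by (simp add: scaleR_sum_right[symmetric] scaleR_diff_right[symmetric] dist_norm)
      also have "\<dots> \<le> \<bar>h\<bar> * e" using elim that by (intro mult_left_mono) auto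
      finally show ?thesis by (simp add: mult.commute)
    qed
    then show ?case by blast
  qed
  then have "\<exists>g0. \<forall>y\<in>S. (\<lambda>n. f n y) sums g0 y \<and> (g0 has_derivative (\<lambda>h. h *\<^sub>R g' y)) (at y within S)"
    using S f'[unfolded has_vector_derivative_def, THEN has_derivative_at_withinI] sums
    by (intro has_derivative_series[where f' = "\<lambda>n y h. h *\<^sub>R f' n y"]) auto
  then obtain g0 where g0: "\<And>y. y \<in> S \<Longrightarrow> (\<lambda>n. f n y) sums g0 y \<and> (g0 has_derivative (\<lambda>h. h *\<^sub>R g' y)) (at y within S)"
    by blast
  have "(g has_derivative (\<lambda>h. h *\<^sub>R g' x)) (at x within S)"
  proof (rule has_derivative_transform[OF S(3)])
    show "g y = g0 y" if "y \<in> S" for y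
      using g0[OF that] sums[OF that] sums_unique2 by blast
  qed (use g0 S(3) in blast)
  then show ?thesis
    using at_within_open[OF S(3,1)] by (simp add: has_vector_derivative_def g'_def)
qed

lemma mexp_derivative_series_sums:
  "(\<lambda>n. (of_nat n * t ^ (n - 1) / fact n) *\<^sub>R mpow A n) sums (A ** mexp (t *\<^sub>R A))"
  for A :: "real^'n::finite^'n"
proof -
  have shift: "(of_nat (Suc j) * t ^ (Suc j - 1) / fact (Suc j)) *\<^sub>R mpow A (Suc j)
      = A ** ((1 / fact j) *\<^sub>R mpow (t *\<^sub>R A) j)" for j
    by (simp add: mpow_scaleR matrix_scalar_ac scalar_matrix_assoc[symmetric] del: of_nat_Suc)
  have "(\<lambda>j. A ** ((1 / fact j) *\<^sub>R mpow (t *\<^sub>R A) j)) sums (A ** mexp (t *\<^sub>R A))"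
    by (rule bounded_linear.sums[OF bounded_bilinear.bounded_linear_right[OF bounded_bilinear_matrix_mult]
          mexp_sums])
  then have "(\<lambda>j. (of_nat (Suc j) * t ^ (Suc j - 1) / fact (Suc j)) *\<^sub>R mpow A (Suc j))
      sums (A ** mexp (t *\<^sub>R A))"
    by (simp only: shift)
  then show ?thesis
    using sums_Suc_iff[of "\<lambda>n. (of_nat n * t ^ (n - 1) / fact n) *\<^sub>R mpow A n"] by simp
qed

text \<open>The defining property of the matrix exponential: d/dt exp(tA) = A exp(tA),
  by termwise differentiation with an exponential majorant on the interval |x| < |t| + 1.\<close>
lemma mexp_has_vector_derivative:
  "((\<lambda>t. mexp (t *\<^sub>R A)) has_vector_derivative A ** mexp (t *\<^sub>R A)) (at t)"
  for A :: "real^'n::finite^'n"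
proof -
  obtain K where K: "K > 0"
    "\<And>A n. norm (mpow (A::real^'n::finite^'n) n) \<le> norm (mat 1::real^'n^'n) * (K * norm A) ^ n"
    using norm_mpow_le by blast
  define c where "c = norm (mat 1::real^'n^'n) * (K * norm A)"
  define R where "R = \<bar>t\<bar> + 1"
  define d where "d n x = (of_nat n * x ^ (n - 1) / fact n) *\<^sub>R mpow A n" for n x
  define B where "B n = (case n of 0 \<Rightarrow> 0 | Suc j \<Rightarrow> c * (R * (K * norm A)) ^ j / fact j)" for n
  have terms: "(\<lambda>n. (x ^ n / fact n) *\<^sub>R mpow A n) sums mexp (x *\<^sub>R A)" for x
    using mexp_sums[of "x *\<^sub>R A"] by (simp add: mpow_scaleR)
  have deriv: "((\<lambda>x. (x ^ n / fact n) *\<^sub>R mpow A n) has_vector_derivative d n x) (at x)" for n x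
    unfolding d_def by (auto intro!: derivative_eq_intros)
  have bound: "norm (d n x) \<le> B n" if "x \<in> ball 0 R" for n x
  proof (cases n)
    case (Suc j)
    have "norm (d n x) = (\<bar>x\<bar> ^ j / fact j) * norm (mpow A (Suc j))"
      by (simp add: Suc d_def power_abs del: of_nat_Suc)
    also have "\<dots> \<le> (R ^ j / fact j) * (norm (mat 1::real^'n^'n) * (K * norm A) ^ Suc j)"
      using K(2)[of A "Suc j"] that by (intro mult_mono divide_right_mono power_mono) auto
    finally show ?thesis by (simp add: B_def Suc c_def algebra_simps)
  qed (simp add: d_def B_def)
  have "summable (\<lambda>j. B (Suc j))"
    using summable_exp_majorant[of c "R * (K * norm A)"] by (simp add: B_def)
  then have "summable B" by (simp add: summable_Suc_iff)
  have "t \<in> ball 0 R" by (simp add: R_def)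
  then have "((\<lambda>t. mexp (t *\<^sub>R A)) has_vector_derivative (\<Sum>n. d n t)) (at t)"
    by (rule has_vector_derivative_series_majorant[OF open_ball convex_ball _ deriv bound
          \<open>summable B\<close> terms])
  then show ?thesis
    using mexp_derivative_series_sums[of t A] by (simp add: d_def sums_iff)
qed

lemma sum_UNIV_Plus:
  "(\<Sum>x\<in>(UNIV::('a::finite + 'b::finite) set). f x) = (\<Sum>a\<in>UNIV. f (Inl a)) + (\<Sum>b\<in>UNIV. f (Inr b))"
  using sum.Plus[of "UNIV::'a set" "UNIV::'b set" f] by (simp add: o_def)

lemma blk_matrix_mult:
  fixes X Y :: "real^('n::finite + 'n + 'n)^('n + 'n + 'n)"
  assumes "p \<in> {1,2,3}" "q \<in> {1,2,3}"
  shows "blk p q (X ** Y) = blk p 1 X ** blk 1 q Y + blk p 2 X ** blk 2 q Y + blk p 3 X ** blk 3 q Y"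
  using assms by (auto simp: vec_eq_iff blk_def matrix_matrix_mult_def sum_UNIV_Plus)

lemma bounded_linear_blk: "bounded_linear (blk p q :: real^('n::finite + 'n + 'n)^('n + 'n + 'n) \<Rightarrow> _)"
  by (rule linear_conv_bounded_linear[THEN iffD1], rule linearI) (auto simp: vec_eq_iff blk_def Let_def)

lemma blk_gen:
  "blk 1 1 (gen N M) = - transpose N" "blk 1 2 (gen N M) = M ** Jmat" "blk 1 3 (gen N M) = 0"
  "blk 2 1 (gen N M) = 0" "blk 2 2 (gen N M) = - transpose N" "blk 2 3 (gen N M) = M"
  "blk 3 1 (gen N M) = 0" "blk 3 2 (gen N M) = 0" "blk 3 3 (gen N M) = N"
  by (simp_all add: vec_eq_iff blk_def gen_def block3_def)

lemma blk_mat_1: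
  "blk 3 3 (mat 1::real^('n::finite + 'n + 'n)^('n + 'n + 'n)) = mat 1"
  "blk 2 3 (mat 1::real^('n::finite + 'n + 'n)^('n + 'n + 'n)) = 0"
  "blk 1 3 (mat 1::real^('n::finite + 'n + 'n)^('n + 'n + 'n)) = 0"
  by (simp_all add: vec_eq_iff blk_def mat_def Let_def)

lemma blk_Emat_has_vector_derivative:
  assumes "p \<in> {1,2,3}" "q \<in> {1,2,3}"
  shows "((\<lambda>t. blk p q (Emat N M t)) has_vector_derivative
     blk p 1 (gen N M) ** blk 1 q (Emat N M t) + blk p 2 (gen N M) ** blk 2 q (Emat N M t)
     + blk p 3 (gen N M) ** blk 3 q (Emat N M t)) (at t within S)"
  using bounded_linear.has_vector_derivative[OF bounded_linear_blk has_vector_derivative_at_within[OF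
        mexp_has_vector_derivative[where A = "gen N M" and t = t]], of p q S]
  by (simp add: Emat_def blk_matrix_mult[OF assms])

lemma F3_has_vector_derivative:
  "((\<lambda>t. F3 N M t) has_vector_derivative N ** F3 N M t) (at t within S)"
  using blk_Emat_has_vector_derivative[of 3 3 N M t S] by (simp add: F3_def blk_gen[simplified])

lemma G2_has_vector_derivative:
  "((\<lambda>t. G2 N M t) has_vector_derivative - transpose N ** G2 N M t + M ** F3 N M t) (at t within S)"
  using blk_Emat_has_vector_derivative[of 2 3 N M t S] by (simp add: G2_def F3_def blk_gen[simplified])

lemma gamma_has_vector_derivative:
  "((\<lambda>t. gamma N M t) has_vector_derivative
    - transpose N ** gamma N M t + (M ** Jmat) ** G2 N M t) (at t within S)"
  using blk_Emat_has_vector_derivative[of 1 3 N M t S] by (simp add: gamma_def G2_def blk_gen[simplified])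

lemma G2_0: "G2 N M 0 = 0" and gamma_0: "gamma N M 0 = 0"
  by (simp_all add: G2_def gamma_def Emat_def mexp_zero blk_mat_1[simplified])

text \<open>If X solves X' = -N^T X + R with X(0) = 0, then F3^T X is the integral of F3^T R,
  because F3' = N F3 makes the N-terms of (F3^T X)' cancel.\<close>
lemma transpose_F3_mult_solution:
  assumes "0 \<le> t" and X0: "X 0 = 0"
    and X: "\<And>s. ((X has_vector_derivative - transpose N ** X s + R s) (at s within {0..t}))"
  shows "transpose (F3 N M t) ** X t = integral {0..t} (\<lambda>s. transpose (F3 N M s) ** R s)"
proof -
  have "((\<lambda>s. transpose (F3 N M s) ** X s) has_vector_derivative transpose (F3 N M s) ** R s)
      (at s within {0..t})" for s
    using has_vector_derivative_matrix_mult[OF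
        has_vector_derivative_transpose[OF F3_has_vector_derivative[of N M]] X[of s]]
    by (simp add: matrix_add_ldistrib matrix_mult_diff_right matrix_mult_minus_left
        matrix_mul_assoc matrix_transpose_mul)
  from fundamental_theorem_of_calculus[OF assms(1) this]
  show ?thesis by (simp add: X0 integral_unique)
qed

lemma transpose_F3_mult_G2:
  "0 \<le> t \<Longrightarrow> transpose (F3 N M t) ** G2 N M t = integral {0..t} (\<lambda>s. transpose (F3 N M s) ** M ** F3 N M s)"
  using transpose_F3_mult_solution[OF _ G2_0 G2_has_vector_derivative] by (simp add: matrix_mul_assoc)

lemma transpose_F3_mult_gamma:
  "0 \<le> t \<Longrightarrow> transpose (F3 N M t) ** gamma N M t =
     integral {0..t} (\<lambda>s. transpose (F3 N M s) ** M ** Jmat ** G2 N M s)"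
  using transpose_F3_mult_solution[OF _ gamma_0 gamma_has_vector_derivative] by (simp add: matrix_mul_assoc)

lemma continuous_on_F3: "continuous_on S (F3 N M)"
  by (rule continuous_at_imp_continuous_on)
     (use has_vector_derivative_continuous[OF F3_has_vector_derivative[where S = UNIV]] in auto)

lemma continuous_on_G2: "continuous_on S (G2 N M)"
  by (rule continuous_at_imp_continuous_on)
     (use has_vector_derivative_continuous[OF G2_has_vector_derivative[where S = UNIV]] in auto)

text \<open>For symmetric M, the first variation of the integrand F3^T M F3 in the direction
  dF3 = -J G2 integrates to the expression appearing in the theorem: the two cross terms
  are W and W^T with W = F3^T M J G2, whose integral is F3^T gamma.\<close>
lemma integral_quadratic_variation:
  fixes N M M' :: "real^('m::finite + 'm)^('m + 'm)"
  assumes symM: "transpose M = M" and "0 \<le> t"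
  shows "integral {0..t} (\<lambda>s. transpose (- (Jmat ** G2 N M s)) ** M ** F3 N M s
            + transpose (F3 N M s) ** M' ** F3 N M s + transpose (F3 N M s) ** M ** - (Jmat ** G2 N M s))
       = integral {0..t} (\<lambda>s. transpose (F3 N M s) ** M' ** F3 N M s)
         - transpose (F3 N M t) ** gamma N M t - transpose (transpose (F3 N M t) ** gamma N M t)"
proof -
  define W where "W s = transpose (F3 N M s) ** M ** Jmat ** G2 N M s" for s
  define V where "V s = transpose (F3 N M s) ** M' ** F3 N M s" for s
  have integrand: "transpose (- (Jmat ** G2 N M s)) ** M ** F3 N M s
            + transpose (F3 N M s) ** M' ** F3 N M s + transpose (F3 N M s) ** M ** - (Jmat ** G2 N M s)
      = V s - W s - transpose (W s)" for s
    by (simp add: V_def W_def transpose_minus matrix_transpose_mul symM matrix_mult_minus_left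
        matrix_mult_minus_right matrix_mul_assoc)
  have W: "W integrable_on {0..t}" and V: "V integrable_on {0..t}"
    unfolding W_def[abs_def] V_def[abs_def]
    by (intro integrable_continuous_interval continuous_intros continuous_on_F3 continuous_on_G2)+
  have Wt: "integral {0..t} (\<lambda>s. transpose (W s)) = transpose (integral {0..t} W)"
    using integral_linear[OF W bounded_linear_transpose] by (simp add: o_def)
  have "(\<lambda>s. transpose (W s)) integrable_on {0..t}"
    using integrable_linear[OF W bounded_linear_transpose] by (simp add: o_def)
  then show ?thesis
    using transpose_F3_mult_gamma[OF \<open>0 \<le> t\<close>, of N M] unfolding integrand
    by (simp add: integral_diff V W integrable_diff Wt W_def[symmetric] V_def[symmetric])
qed

text \<open>The generator depends linearly on (N, M), so the exponential and all its blocks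
  depend jointly continuously on the parameter and on time.\<close>
lemma bounded_linear_gen: "bounded_linear (\<lambda>p. gen (fst p) (snd p))"
  by (rule linear_conv_bounded_linear[THEN iffD1], rule linearI)
     (simp_all add: vec_eq_iff gen_def block3_def transpose_def matrix_matrix_mult_def
        sum.distrib algebra_simps scaleR_sum_right sum_distrib_left split: sum.split)

lemma continuous_on_blk_Emat:
  assumes "continuous_on UNIV N" "continuous_on UNIV M"
  shows "continuous_on UNIV (\<lambda>p. blk i j (Emat (N (fst p)) (M (fst p)) (snd p)))"
proof -
  have "continuous_on UNIV (\<lambda>p. (N (fst p), M (fst p)))"
    by (intro continuous_intros continuous_on_compose2[OF assms(1)] continuous_on_compose2[OF assms(2)]) auto
  then have "continuous_on UNIV (\<lambda>p. gen (N (fst p)) (M (fst p)))"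
    using bounded_linear.continuous_on[OF bounded_linear_gen] by fastforce
  then show ?thesis
    unfolding Emat_def by (intro bounded_linear.continuous_on[OF bounded_linear_blk] continuous_intros)
qed

lemma has_vector_derivative_quadratic_integral:
  fixes F F' :: "real \<Rightarrow> real \<Rightarrow> real^'n::finite^'n" and M M' :: "real \<Rightarrow> real^'n^'n"
  assumes dF: "\<And>l s. s \<in> {a..b} \<Longrightarrow> ((\<lambda>l. F l s) has_vector_derivative F' l s) (at l)"
    and cF: "continuous_on UNIV (\<lambda>p. F (fst p) (snd p))"
    and cF': "continuous_on UNIV (\<lambda>p. F' (fst p) (snd p))"
    and dM: "\<And>l. (M has_vector_derivative M' l) (at l)" and cM': "continuous_on UNIV M'"
  shows "((\<lambda>l. integral {a..b} (\<lambda>s. transpose (F l s) ** M l ** F l s)) has_vector_derivative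
      integral {a..b} (\<lambda>s. transpose (F' lam s) ** M lam ** F lam s
        + transpose (F lam s) ** M' lam ** F lam s + transpose (F lam s) ** M lam ** F' lam s)) (at lam)"
proof -
  define D where "D l s = transpose (F' l s) ** M l ** F l s
        + transpose (F l s) ** M' l ** F l s + transpose (F l s) ** M l ** F' l s" for l s
  have cM: "continuous_on UNIV M"
    using dM by (intro continuous_at_imp_continuous_on ballI has_vector_derivative_continuous) auto
  have cfst: "continuous_on UNIV (\<lambda>p. f (fst p))" if "continuous_on UNIV f" for f :: "real \<Rightarrow> real^'n^'n"
    by (rule continuous_on_compose2[OF that continuous_on_fst[OF continuous_on_id]]) auto
  have "((\<lambda>l. integral (cbox a b) (\<lambda>s. transpose (F l s) ** M l ** F l s)) has_vector_derivative
      integral (cbox a b) (D lam)) (at lam within UNIV)"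
  proof (rule leibniz_rule_vector_derivative)
    show "((\<lambda>l. transpose (F l s) ** M l ** F l s) has_vector_derivative D l s) (at l within UNIV)"
      if "s \<in> cbox a b" for l s
      using has_vector_derivative_matrix_mult[OF has_vector_derivative_matrix_mult[OF
            has_vector_derivative_transpose[OF dF] dM] dF] that
      by (simp add: D_def matrix_add_ldistrib matrix_mult_add_left matrix_mul_assoc algebra_simps)
    have "continuous_on UNIV (\<lambda>p. D (fst p) (snd p))"
      unfolding D_def by (intro continuous_intros cF cF' cfst cM cM')
    then show "continuous_on (UNIV \<times> cbox a b) (\<lambda>(l, s). D l s)"
      by (simp add: case_prod_beta') (rule continuous_on_subset, auto)
    show "(\<lambda>s. transpose (F l s) ** M l ** F l s) integrable_on cbox a b" for l
      by (intro integrable_continuous continuous_intros continuous_on_compose2[OF cF, of _ "\<lambda>s. (l, s)", simplified])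
  qed auto
  then show ?thesis by (simp add: D_def[abs_def])
qed

lemma has_vector_derivative_mult_vanishing:
  fixes Z D :: "real \<Rightarrow> real^'n::finite^'n"
  assumes D: "(D has_vector_derivative D') (at x)" and D0: "D x = 0" and Z: "isCont Z x"
  shows "((\<lambda>y. Z y ** D y) has_vector_derivative Z x ** D') (at x)"
proof -
  have lim: "((\<lambda>y. ((D y - D x) - (y - x) *\<^sub>R D') /\<^sub>R norm (y - x)) \<longlongrightarrow> 0) (at x)"
    using D unfolding has_vector_derivative_def has_derivative_at_within by simp
  have Zl: "(Z \<longlongrightarrow> Z x) (at x)" using Z isCont_def by blast
  have t1: "((\<lambda>y. Z y ** (((D y - D x) - (y - x) *\<^sub>R D') /\<^sub>R norm (y - x))) \<longlongrightarrow> 0) (at x)"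
    using bounded_bilinear.tendsto[OF bounded_bilinear_matrix_mult Zl lim] by simp
  have t2: "((\<lambda>y. ((y - x) / norm (y - x)) *\<^sub>R ((Z y - Z x) ** D')) \<longlongrightarrow> 0) (at x)"
  proof (rule Lim_null_comparison)
    show "\<forall>\<^sub>F y in at x. norm (((y - x) / norm (y - x)) *\<^sub>R ((Z y - Z x) ** D')) \<le> norm ((Z y - Z x) ** D')"
      by (intro always_eventually allI) (simp add: mult_left_le_one_le)
    have "((\<lambda>y. (Z y - Z x) ** D') \<longlongrightarrow> (Z x - Z x) ** D') (at x)"
      by (intro bounded_bilinear.tendsto[OF bounded_bilinear_matrix_mult] tendsto_diff Zl tendsto_const)
    then show "((\<lambda>y. norm ((Z y - Z x) ** D')) \<longlongrightarrow> 0) (at x)"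
      using tendsto_norm_zero by fastforce
  qed
  have "((Z y ** D y - Z x ** D x) - (y - x) *\<^sub>R (Z x ** D')) /\<^sub>R norm (y - x) =
      Z y ** (((D y - D x) - (y - x) *\<^sub>R D') /\<^sub>R norm (y - x)) + ((y - x) / norm (y - x)) *\<^sub>R ((Z y - Z x) ** D')" for y
    by (simp add: D0 matrix_add_ldistrib matrix_mult_diff_right matrix_mult_diff_left matrix_scalar_ac
        scalar_matrix_assoc[symmetric] algebra_simps divide_inverse)
  with tendsto_add_zero[OF t1 t2]
  have "((\<lambda>y. ((Z y ** D y - Z x ** D x) - (y - x) *\<^sub>R (Z x ** D')) /\<^sub>R norm (y - x)) \<longlongrightarrow> 0) (at x)"
    by simp
  then show ?thesis
    unfolding has_vector_derivative_def has_derivative_at_within by (simp add: bounded_linear_scaleR_left)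
qed

text \<open>No differentiability of Z is needed, because
  Y(k) - Y(lam) = Z(k) (P(k) - P(lam) - (X(k) - X(lam)) Y(lam)).\<close>
lemma has_vector_derivative_left_inverse_solution:
  fixes X Y Z P :: "real \<Rightarrow> real^'n::finite^'n"
  assumes XY: "\<And>k. X k ** Y k = P k" and ZX: "\<And>k. Z k ** X k = mat 1"
    and X': "(X has_vector_derivative X') (at lam)" and P': "(P has_vector_derivative P') (at lam)"
    and Z: "isCont Z lam"
  shows "(Y has_vector_derivative Z lam ** (P' - X' ** Y lam)) (at lam)"
proof -
  define R where "R k = P k - P lam - (X k - X lam) ** Y lam" for k
  have "((\<lambda>k. (X k - X lam) ** Y lam) has_vector_derivative X' ** Y lam) (at lam)"
    using has_vector_derivative_matrix_mult[OF has_vector_derivative_diff[OF X' has_vector_derivative_const]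
        has_vector_derivative_const] by simp
  then have R': "(R has_vector_derivative P' - X' ** Y lam) (at lam)"
    unfolding R_def[abs_def]
    using has_vector_derivative_diff[OF has_vector_derivative_diff[OF P' has_vector_derivative_const]]
    by fastforce
  have Y: "Y k = Y lam + Z k ** R k" for k
  proof -
    have "Z k ** R k = Y k - Y lam"
      unfolding R_def XY[symmetric]
      by (simp add: matrix_mult_diff_right matrix_mult_diff_left matrix_mul_assoc ZX)
    then show ?thesis by simp
  qed
  have "((\<lambda>k. Y lam + Z k ** R k) has_vector_derivative Z lam ** (P' - X' ** Y lam)) (at lam)"
    using has_vector_derivative_add[OF has_vector_derivative_const
        has_vector_derivative_mult_vanishing[OF R' _ Z]] by (simp add: R_def)
  then show ?thesis by (rule has_vector_derivative_transform[OF UNIV_I Y])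
qed

lemma transpose_right_inverse:
  fixes A B :: "real^'n::finite^'n"
  assumes "transpose A ** B = mat 1"
  shows "A ** transpose B = mat 1"
proof -
  have "B ** transpose A = mat 1" using assms matrix_left_right_inverse by blast
  then have "transpose (B ** transpose A) = mat 1" by simp
  then show ?thesis by (simp add: matrix_transpose_mul)
qed

theorem lemmaA2:
  fixes N N' M M' :: "real \<Rightarrow> real^('m::finite+'m)^('m+'m)" and H lam :: real
  assumes dN: "\<And>l. (N has_vector_derivative N' l) (at l)" and cN: "continuous_on UNIV N'"
    and dM: "\<And>l. (M has_vector_derivative M' l) (at l)" and cM: "continuous_on UNIV M'"
    and H: "0 \<le> H"
    and symM: "\<And>l. transpose (M l) = M l"
    and inv: "\<And>l s. s \<in> {0..H} \<Longrightarrow>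
                transpose (F2 (N l) (M l) s) ** F3 (N l) (M l) s = mat 1"
    and dF3: "\<And>l s. s \<in> {0..H} \<Longrightarrow>
                ((\<lambda>k. F3 (N k) (M k) s) has_vector_derivative
                   - (Jmat ** G2 (N l) (M l) s)) (at l)"
  shows "((\<lambda>k. G2 (N k) (M k) H) has_vector_derivative
           F2 (N lam) (M lam) H **
             ( - transpose (transpose (F3 (N lam) (M lam) H) ** gamma (N lam) (M lam) H)
               - transpose (F3 (N lam) (M lam) H) ** gamma (N lam) (M lam) H
               + integral {0..H} (\<lambda>s. transpose (F3 (N lam) (M lam) s) ** M' lam ** F3 (N lam) (M lam) s)
               - transpose (- (Jmat ** G2 (N lam) (M lam) H)) ** G2 (N lam) (M lam) H)) (at lam)"
proof -
  have contN: "continuous_on UNIV N" and contM: "continuous_on UNIV M"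
    using dN dM by (auto intro!: continuous_at_imp_continuous_on has_vector_derivative_continuous)
  note blocks = continuous_on_blk_Emat[OF contN contM]
  have cF3: "continuous_on UNIV (\<lambda>p. F3 (N (fst p)) (M (fst p)) (snd p))"
    and cG2: "continuous_on UNIV (\<lambda>p. G2 (N (fst p)) (M (fst p)) (snd p))"
    and cF2: "continuous_on UNIV (\<lambda>p. F2 (N (fst p)) (M (fst p)) (snd p))"
    using blocks[of 3 3] blocks[of 2 3] blocks[of 2 2] by (simp_all add: F3_def G2_def F2_def)
  have HH: "H \<in> {0..H}" using H by simp
  \<comment> \<open>Derivative in the parameter of P = integral of F3^T M F3, which equals F3(H)^T G2(H).\<close>
  have dP: "((\<lambda>l. integral {0..H} (\<lambda>s. transpose (F3 (N l) (M l) s) ** M l ** F3 (N l) (M l) s))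
      has_vector_derivative integral {0..H} (\<lambda>s. transpose (- (Jmat ** G2 (N lam) (M lam) s)) ** M lam ** F3 (N lam) (M lam) s
        + transpose (F3 (N lam) (M lam) s) ** M' lam ** F3 (N lam) (M lam) s
        + transpose (F3 (N lam) (M lam) s) ** M lam ** - (Jmat ** G2 (N lam) (M lam) s))) (at lam)"
    by (intro has_vector_derivative_quadratic_integral dF3 dM cM cF3 cG2 continuous_intros)
  \<comment> \<open>F2(H) is a continuous left inverse of F3(H)^T, so the solution G2(H) of F3(H)^T Y = P
     is differentiable.\<close>
  have "continuous_on UNIV (\<lambda>l. F2 (N l) (M l) H)"
    using continuous_on_compose2[OF cF2 continuous_on_Pair[OF continuous_on_id continuous_on_const]] by simp
  then have "isCont (\<lambda>l. F2 (N l) (M l) H) lam" by (simp add: continuous_on_eq_continuous_at)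
  from has_vector_derivative_left_inverse_solution[OF transpose_F3_mult_G2[OF H]
        transpose_right_inverse[OF inv[OF HH]] has_vector_derivative_transpose[OF dF3[OF HH]] dP this]
  show ?thesis unfolding integral_quadratic_variation[OF symM H] by (simp add: algebra_simps)
qed

end
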